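(* Let $h:\mathbb{R}\to(0,1)$ be continuous and let $B^{(h)}$ be the normalized multifractional Brownian motion with function $h$. For every $n\ge1$, every pairwise distinct $t_1,\dots,t_n\in\mathbb{R}\setminus\{0\}$ and every $(\beta_1,\dots,\beta_n)\in\mathbb{R}^n$, if $\sum_{j=1}^n\beta_jB^{(h)}(t_j)=0$ almost surely, then $\beta_1=\dots=\beta_n=0$.
   Context: For $x\in(0,1)$, $c_x:=\big(2\pi/(\Gamma(2x+1)\sin(\pi x))\big)^{1/2}$. The normalized multifractional Brownian motion with continuous function $h:\mathbb{R}\to(0,1)$ is the centered Gaussian process with covariance $R_h(t,s)=\frac{c^2_{h_{t,s}}}{c_{h(t)}c_{h(s)}}\cdot\frac12\big(|t|^{2h_{t,s}}+|s|^{2h_{t,s}}-|t-s|^{2h_{t,s}}\big)$, where $h_{t,s}=(h(t)+h(s))/2$. Equivalently, $B^{(h)}(t)=\int_{\mathbb{R}}\frac{e^{itu}-1}{c_{h(t)}|u|^{h(t)+1/2}}\widetilde W(du)$ for a complex Gaussian random measure $\widetilde W$ associated with a standard white noise. *)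

theory Defs
  imports "HOL-Probability.Probability"
begin

definition c_mbm :: "real \<Rightarrow> real" where
  "c_mbm x = sqrt (2 * pi / (Gamma (2 * x + 1) * sin (pi * x)))"

definition R_mbm :: "(real \<Rightarrow> real) \<Rightarrow> real \<Rightarrow> real \<Rightarrow> real" where
  "R_mbm h t s =
     (let H = (h t + h s) / 2
      in (c_mbm H)\<^sup>2 / (c_mbm (h t) * c_mbm (h s)) * (1/2) *
         (\<bar>t\<bar> powr (2 * H) + \<bar>s\<bar> powr (2 * H) - \<bar>t - s\<bar> powr (2 * H)))"

definition centered_gaussian_process ::
  "'a measure \<Rightarrow> (real \<Rightarrow> 'a \<Rightarrow> real) \<Rightarrow> (real \<Rightarrow> real \<Rightarrow> real) \<Rightarrow> bool" where
  "centered_gaussian_process M X K \<longleftrightarrow>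
     prob_space M \<and> (\<forall>t. X t \<in> borel_measurable M) \<and>
     (\<forall>(I::real set) (c::real \<Rightarrow> real). finite I \<longrightarrow>
        (let Y = (\<lambda>\<omega>. \<Sum>t\<in>I. c t * X t \<omega>);
             v = (\<Sum>s\<in>I. \<Sum>t\<in>I. c s * c t * K s t)
         in (0 < v \<and> distributed M lborel Y (normal_density 0 (sqrt v))) \<or>
            (v = 0 \<and> (AE \<omega> in M. Y \<omega> = 0))))"

definition normalized_mbm :: "'a measure \<Rightarrow> (real \<Rightarrow> real) \<Rightarrow> (real \<Rightarrow> 'a \<Rightarrow> real) \<Rightarrow> bool" where
  "normalized_mbm M h X \<longleftrightarrow> centered_gaussian_process M X (R_mbm h)"

end

theory Submission
  imports Defs
begin

(* Write B for the normalized multifractional Brownian motion.  Since every finite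
   linear combination of B is Gaussian with variance v = \<Sum>\<^sub>j \<Sum>\<^sub>k \<beta>\<^sub>j \<beta>\<^sub>k R_mbm h t\<^sub>j t\<^sub>k,
   a combination that vanishes almost surely must have v = 0 (a nondegenerate normal variable
   is not a.s. constant).  It therefore suffices to show that the covariance R_mbm is strictly
   positive definite at distinct nonzero times.

   1. Real integrals: \<integral> (1 - cos (xu)) |u| powr (-a-1) du = C(a) |x| powr a for 0 < a < 2, with
      C(a) = \<pi> / (\<Gamma>(a+1) sin (\<pi>a/2)); computed via Laplace transforms, Fubini and the
      reflection formula for \<Gamma>.  Since c\<^sub>x\<^sup>2 = 2 C(2x), this gives the harmonizable
      representation R_mbm h s r = \<integral> Re (k\<^sub>s(u) cnj k\<^sub>r(u)) du with kernels
      k\<^sub>t(u) = (exp (\<i>tu) - 1) / (c\<^sub>h\<^sub>(\<^sub>t\<^sub>) |u| powr (h t + 1/2)), hence v = \<integral> |\<Sum>\<^sub>j \<beta>\<^sub>j k\<^sub>t\<^sub>j(u)|\<^sup>2 du.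
   2. Linear independence: if \<Sum>\<^sub>j \<beta>\<^sub>j k\<^sub>t\<^sub>j(u) = 0 for all u > 0, then all \<beta>\<^sub>j = 0; the terms
      with the smallest exponent dominate as u \<rightarrow> \<infinity>, and trigonometric sums with distinct
      frequencies that vanish at infinity have zero coefficients.
   3. If v = 0, the continuous integrand vanishes a.e., hence everywhere on u > 0, so \<beta> = 0.
   The argument uses only 0 < h < 1. *)

section \<open>The integral of \<open>(1 - cos (xu)) |u| powr (-a-1)\<close>\<close>

lemma tendsto_exp_neg_mult_at_top: "x > 0 \<Longrightarrow> ((\<lambda>u::real. exp (-(x*u))) \<longlongrightarrow> 0) at_top"
  by (intro filterlim_compose[OF exp_at_bot] filterlim_compose[OF filterlim_uminus_at_bot_at_top]
       filterlim_tendsto_pos_mult_at_top[OF tendsto_const] filterlim_ident) auto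

lemma nn_integral_exp_neg:
  fixes c :: real assumes c: "c > 0"
  shows "(\<integral>\<^sup>+r. ennreal (indicator {0..} r * exp (-(c*r))) \<partial>lborel) = ennreal (1/c)"
proof -
  have "(\<integral>\<^sup>+r. ennreal (indicator {0..} r * exp (-(c*r))) \<partial>lborel)
      = (\<integral>\<^sup>+r. ennreal (exp (-(c*r))) * indicator {0..} r \<partial>lborel)"
    by (intro nn_integral_cong) (auto simp: indicator_def)
  also have "\<dots> = ennreal (0 - (- exp (-(c*0)) / c))"
  proof (rule nn_integral_FTC_atLeast)
    show "((\<lambda>r. - exp (-(c*r)) / c) has_real_derivative exp (-(c*r))) (at r)" for r
      using c by (auto intro!: derivative_eq_intros)
    show "((\<lambda>r. - exp (-(c*r)) / c) \<longlongrightarrow> 0) at_top"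
      using tendsto_divide[OF tendsto_minus[OF tendsto_exp_neg_mult_at_top[OF c]] tendsto_const[of c]] c by simp
  qed auto
  finally show ?thesis by simp
qed

lemma nn_integral_powr_exp_scaled:
  fixes u b :: real
  assumes u: "u > 0" and b: "b > 0"
  shows "(\<integral>\<^sup>+x. ennreal (indicator {0..} x * x powr (b-1) * exp (-(u*x))) \<partial>lborel)
         = ennreal (Gamma b * u powr (-b))"
proof -
  have "ennreal (Gamma b) = (\<integral>\<^sup>+t. ennreal (indicator {0..} t * t powr (b - 1) / exp t) \<partial>lborel)"
    using Gamma_conv_nn_integral_real[OF b] by simp
  also have "\<dots> = ennreal \<bar>u\<bar> * (\<integral>\<^sup>+x. ennreal (indicator {0..} (0 + u*x) * (0 + u*x) powr (b - 1) / exp (0 + u*x)) \<partial>lborel)"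
    by (rule nn_integral_real_affine) (use u in auto)
  also have "\<dots> = ennreal u * (\<integral>\<^sup>+x. ennreal (u powr (b-1)) * ennreal (indicator {0..} x * x powr (b-1) * exp (-(u*x))) \<partial>lborel)"
    using u by (intro arg_cong2[where f="(*)"] nn_integral_cong)
      (auto simp: indicator_def ennreal_mult'[symmetric] powr_mult exp_minus field_simps zero_le_mult_iff)
  also have "\<dots> = ennreal (u * u powr (b-1)) * (\<integral>\<^sup>+x. ennreal (indicator {0..} x * x powr (b-1) * exp (-(u*x))) \<partial>lborel)"
    using u by (subst nn_integral_cmult) (auto simp: ennreal_mult' mult.assoc)
  finally have eq: "ennreal (Gamma b) = ennreal (u powr b) * (\<integral>\<^sup>+x. ennreal (indicator {0..} x * x powr (b-1) * exp (-(u*x))) \<partial>lborel)"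
    using u by (simp add: powr_mult_base)
  have "ennreal (Gamma b * u powr (-b)) = ennreal (Gamma b) * ennreal (u powr (-b))"
    using Gamma_real_pos[OF b] by (simp add: ennreal_mult)
  also have "\<dots> = (ennreal (u powr b) * ennreal (u powr (-b))) * (\<integral>\<^sup>+x. ennreal (indicator {0..} x * x powr (b-1) * exp (-(u*x))) \<partial>lborel)"
    by (subst eq) (simp add: mult_ac)
  also have "ennreal (u powr b) * ennreal (u powr (-b)) = 1"
    using u by (simp add: ennreal_mult[symmetric] powr_add[symmetric])
  finally show ?thesis by simp
qed

lemma Gamma_reflection_real:
  fixes b :: real
  shows "Gamma b * Gamma (1 - b) = pi / sin (pi * b)"
proof -
  have "complex_of_real (Gamma b * Gamma (1 - b)) = Gamma (complex_of_real b) * Gamma (1 - complex_of_real b)"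
    using Gamma_complex_of_real[of "1-b"] by (simp add: Gamma_complex_of_real)
  also have "\<dots> = of_real pi / sin (of_real pi * of_real b)" by (rule Gamma_reflection_complex)
  also have "\<dots> = complex_of_real (pi / sin (pi * b))" by (simp add: sin_of_real[symmetric] of_real_mult[symmetric] del: of_real_mult)
  finally show ?thesis by (simp only: of_real_eq_iff)
qed

text \<open>\<open>\<integral>\<^sub>0\<^sup>\<infinity> y powr (b-1) / (1+y) dy = \<Gamma>(b) \<Gamma>(1-b) = \<pi> / sin (\<pi>b)\<close>, writing
  \<open>1/(1+y) = \<integral>\<^sub>0\<^sup>\<infinity> exp (-(1+y)r) dr\<close> and exchanging the integrals.\<close>
lemma nn_integral_powr_over_1_plus:
  fixes b :: real assumes b0: "0 < b" and b1: "b < 1"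
  shows "(\<integral>\<^sup>+y. ennreal (indicator {0..} y * y powr (b-1) / (1+y)) \<partial>lborel) = ennreal (pi / sin (pi * b))"
proof -
  have "(\<integral>\<^sup>+y. ennreal (indicator {0..} y * y powr (b-1) / (1+y)) \<partial>lborel)
      = (\<integral>\<^sup>+y. ennreal (indicator {0..} y * y powr (b-1)) *
             (\<integral>\<^sup>+r. ennreal (indicator {0..} r * exp (-((1+y)*r))) \<partial>lborel) \<partial>lborel)"
  proof (intro nn_integral_cong)
    fix y :: real
    show "ennreal (indicator {0..} y * y powr (b-1) / (1+y)) = ennreal (indicator {0..} y * y powr (b-1)) *
             (\<integral>\<^sup>+r. ennreal (indicator {0..} r * exp (-((1+y)*r))) \<partial>lborel)"
    proof (cases "y \<ge> 0")
      case True
      thus ?thesis by (subst nn_integral_exp_neg) (auto simp: ennreal_mult'[symmetric] divide_simps)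
    qed (simp add: indicator_def)
  qed
  also have "\<dots> = (\<integral>\<^sup>+y. \<integral>\<^sup>+r. ennreal (indicator {0..} y * y powr (b-1) * (indicator {0..} r * exp (-r) * exp (-(r*y)))) \<partial>lborel \<partial>lborel)"
    by (subst nn_integral_cmult[symmetric])
       (auto intro!: nn_integral_cong simp: ennreal_mult'[symmetric] indicator_def exp_add[symmetric] exp_diff exp_minus field_simps)
  also have "\<dots> = (\<integral>\<^sup>+r. \<integral>\<^sup>+y. ennreal (indicator {0..} y * y powr (b-1) * (indicator {0..} r * exp (-r) * exp (-(r*y)))) \<partial>lborel \<partial>lborel)"
    by (subst lborel_pair.Fubini') (auto simp: case_prod_unfold)
  also have "\<dots> = (\<integral>\<^sup>+r. ennreal (indicator {0..} r * exp (-r)) * (\<integral>\<^sup>+y. ennreal (indicator {0..} y * y powr (b-1) * exp (-(r*y))) \<partial>lborel) \<partial>lborel)"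
    by (subst nn_integral_cmult[symmetric])
       (auto intro!: nn_integral_cong simp: ennreal_mult'[symmetric] indicator_def algebra_simps)
  also have "\<dots> = (\<integral>\<^sup>+r. ennreal (Gamma b) * ennreal (indicator {0..} r * r powr ((1-b)-1) / exp r) \<partial>lborel)"
  proof (intro nn_integral_cong_AE eventually_mono[OF AE_lborel_singleton[of 0]] impI)
    fix r :: real assume r: "r \<noteq> 0"
    show "ennreal (indicator {0..} r * exp (-r)) * (\<integral>\<^sup>+y. ennreal (indicator {0..} y * y powr (b-1) * exp (-(r*y))) \<partial>lborel)
        = ennreal (Gamma b) * ennreal (indicator {0..} r * r powr ((1-b)-1) / exp r)"
    proof (cases "r > 0")
      case True
      have G: "Gamma b > 0" using b0 by (rule Gamma_real_pos)
      show ?thesis using True G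
        by (subst nn_integral_powr_exp_scaled[OF True b0])
           (simp add: ennreal_mult'[symmetric] exp_minus field_simps)
    next
      case False thus ?thesis using r by (simp add: indicator_def)
    qed
  qed
  also have "\<dots> = ennreal (Gamma b) * ennreal (Gamma (1-b))"
    using b1 by (subst nn_integral_cmult) (auto simp: Gamma_conv_nn_integral_real)
  also have "\<dots> = ennreal (pi / sin (pi * b))"
    using b0 b1 by (simp add: ennreal_mult'[symmetric] Gamma_reflection_real Gamma_real_pos less_imp_le)
  finally show ?thesis .
qed

lemma nn_integral_atLeast_SUP:
  fixes h :: "real \<Rightarrow> ennreal" and b :: "nat \<Rightarrow> real"
  assumes [measurable]: "h \<in> borel_measurable borel" and inc: "incseq b" and unb: "\<And>x. \<exists>n. x \<le> b n"
  shows "(\<integral>\<^sup>+x. h x * indicator {0..} x \<partial>lborel) = (SUP n. \<integral>\<^sup>+x. h x * indicator {0..b n} x \<partial>lborel)"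
proof -
  have "(\<integral>\<^sup>+x. h x * indicator {0..} x \<partial>lborel) = (\<integral>\<^sup>+x. (SUP n. h x * indicator {0..b n} x) \<partial>lborel)"
  proof (intro nn_integral_cong)
    fix x :: real
    show "h x * indicator {0..} x = (SUP n. h x * indicator {0..b n} x)"
    proof (rule antisym)
      obtain n where n: "x \<le> b n" using unb by blast
      have "h x * indicator {0..} x = h x * indicator {0..b n} x"
        using n by (auto simp: indicator_def)
      also have "\<dots> \<le> (SUP n. h x * indicator {0..b n} x)" by (rule SUP_upper) simp
      finally show "h x * indicator {0..} x \<le> (SUP n. h x * indicator {0..b n} x)" .
      show "(SUP n. h x * indicator {0..b n} x) \<le> h x * indicator {0..} x"
        by (rule SUP_least) (auto simp: indicator_def)
    qed
  qed
  also have "\<dots> = (SUP n. \<integral>\<^sup>+x. h x * indicator {0..b n} x \<partial>lborel)"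
  proof (rule nn_integral_monotone_convergence_SUP)
    show "incseq (\<lambda>n x. h x * indicator {0..b n} x)"
      using inc by (auto simp: incseq_def le_fun_def indicator_def intro: order_trans)
  qed simp
  finally show ?thesis .
qed

lemma nn_integral_square_subst:
  fixes f :: "real \<Rightarrow> real"
  assumes [measurable]: "f \<in> borel_measurable borel"
  shows "(\<integral>\<^sup>+x. ennreal (f x) * indicator {0..} x \<partial>lborel)
       = (\<integral>\<^sup>+y. ennreal (f (y\<^sup>2) * (2 * y)) * indicator {0..} y \<partial>lborel)"
proof -
  have "(\<integral>\<^sup>+x. ennreal (f x) * indicator {0..} x \<partial>lborel)
      = (SUP n. \<integral>\<^sup>+x. ennreal (f x) * indicator {0..(real n)\<^sup>2} x \<partial>lborel)"
  proof (rule nn_integral_atLeast_SUP)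
    show "incseq (\<lambda>n. (real n)\<^sup>2)" by (auto simp: incseq_def power_mono)
    fix x :: real obtain n where "x \<le> real n" using real_arch_simple by blast
    moreover have "real n \<le> (real n)\<^sup>2" by (cases n) (auto simp: power2_eq_square)
    ultimately show "\<exists>n. x \<le> (real n)\<^sup>2" by (meson order_trans)
  qed simp
  also have "\<dots> = (SUP n. \<integral>\<^sup>+y. ennreal (f (y\<^sup>2) * (2 * y)) * indicator {0..real n} y \<partial>lborel)"
  proof (intro SUP_cong refl)
    fix n :: nat
    have "(\<integral>\<^sup>+x. ennreal (f x * indicator {(0::real)\<^sup>2..(real n)\<^sup>2} x) \<partial>lborel)
        = (\<integral>\<^sup>+x. ennreal (f (x\<^sup>2) * (2*x) * indicator {0..real n} x) \<partial>lborel)"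
    proof (rule nn_integral_substitution)
      show "set_borel_measurable borel {(0::real)\<^sup>2..(real n)\<^sup>2} f" unfolding set_borel_measurable_def by measurable
      show "((\<lambda>y. y\<^sup>2) has_real_derivative 2 * x) (at x)" for x :: real
        using DERIV_pow[of 2 x] by simp
    qed (auto intro!: continuous_intros)
    hence sub: "(\<integral>\<^sup>+x. ennreal (f x * indicator {0..(real n)\<^sup>2} x) \<partial>lborel)
        = (\<integral>\<^sup>+x. ennreal (f (x\<^sup>2) * (2*x) * indicator {0..real n} x) \<partial>lborel)"
      by simp
    have "(\<integral>\<^sup>+x. ennreal (f x) * indicator {0..(real n)\<^sup>2} x \<partial>lborel)
        = (\<integral>\<^sup>+x. ennreal (f x * indicator {0..(real n)\<^sup>2} x) \<partial>lborel)"
      by (intro nn_integral_cong) (auto simp: indicator_def)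
    also have "\<dots> = (\<integral>\<^sup>+x. ennreal (f (x\<^sup>2) * (2*x) * indicator {0..real n} x) \<partial>lborel)" by (fact sub)
    also have "\<dots> = (\<integral>\<^sup>+y. ennreal (f (y\<^sup>2) * (2 * y)) * indicator {0..real n} y \<partial>lborel)"
      by (intro nn_integral_cong) (auto simp: indicator_def)
    finally show "(\<integral>\<^sup>+x. ennreal (f x) * indicator {0..(real n)\<^sup>2} x \<partial>lborel)
        = (\<integral>\<^sup>+y. ennreal (f (y\<^sup>2) * (2 * y)) * indicator {0..real n} y \<partial>lborel)" .
  qed
  also have "\<dots> = (\<integral>\<^sup>+y. ennreal (f (y\<^sup>2) * (2 * y)) * indicator {0..} y \<partial>lborel)"
  proof (rule nn_integral_atLeast_SUP[symmetric])
    show "incseq (\<lambda>n. real n)" by (auto simp: incseq_def)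
    show "\<exists>n. x \<le> real n" for x :: real using real_arch_simple by blast
  qed simp
  finally show ?thesis .
qed

lemma nn_integral_powr_over_1_plus_sq:
  fixes a :: real assumes a0: "0 < a" and a2: "a < 2"
  shows "(\<integral>\<^sup>+x. ennreal (indicator {0..} x * x powr (a-1) / (1+x\<^sup>2)) \<partial>lborel) = ennreal (pi / (2 * sin (pi * a / 2)))"
proof -
  define f where "f y = indicator {0..} y * y powr (a/2-1) / (1+y)" for y :: real
  have sp: "sin (pi * (a/2)) > 0" using a0 a2 by (intro sin_gt_zero) auto
  have "ennreal (pi / sin (pi * (a/2))) = (\<integral>\<^sup>+y. ennreal (f y) \<partial>lborel)"
    unfolding f_def using a0 a2 by (subst nn_integral_powr_over_1_plus) auto
  also have "\<dots> = (\<integral>\<^sup>+y. ennreal (f y) * indicator {0..} y \<partial>lborel)"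
    by (intro nn_integral_cong) (auto simp: f_def indicator_def)
  also have "\<dots> = (\<integral>\<^sup>+x. ennreal (f (x\<^sup>2) * (2 * x)) * indicator {0..} x \<partial>lborel)"
    by (rule nn_integral_square_subst) (unfold f_def, measurable)
  also have "\<dots> = (\<integral>\<^sup>+x. 2 * ennreal (indicator {0..} x * x powr (a-1) / (1+x\<^sup>2)) \<partial>lborel)"
  proof (intro nn_integral_cong)
    fix x :: real
    show "ennreal (f (x\<^sup>2) * (2 * x)) * indicator {0..} x = 2 * ennreal (indicator {0..} x * x powr (a-1) / (1+x\<^sup>2))"
    proof (cases "x > 0")
      case True
      have x2: "x\<^sup>2 = x powr 2" using True by (simp add: powr_numeral)
      have "(x\<^sup>2) powr (a/2-1) = x powr (a-2)" unfolding x2 powr_powr by (simp add: algebra_simps)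
      moreover have "x powr (a-2) * x powr 1 = x powr (a-1)" by (subst powr_add[symmetric]) simp
      ultimately have "(x\<^sup>2) powr (a/2-1) * x = x powr (a-1)" using True by simp
      hence "f (x\<^sup>2) * (2 * x) = 2 * (indicator {0..} x * x powr (a-1) / (1+x\<^sup>2))"
        using True unfolding f_def by (simp add: indicator_def field_simps)
      moreover have "ennreal (2 * (x powr (a - 1) / (1 + x\<^sup>2))) = 2 * ennreal (x powr (a - 1) / (1 + x\<^sup>2))"
        by (subst ennreal_mult') simp_all
      ultimately show ?thesis using True by (simp add: indicator_def)
    next
      case False thus ?thesis by (cases "x = 0") (auto simp: indicator_def f_def)
    qed
  qed
  also have "\<dots> = 2 * (\<integral>\<^sup>+x. ennreal (indicator {0..} x * x powr (a-1) / (1+x\<^sup>2)) \<partial>lborel)"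
    by (rule nn_integral_cmult) simp
  finally have "ennreal (pi / sin (pi * (a/2))) = 2 * (\<integral>\<^sup>+x. ennreal (indicator {0..} x * x powr (a-1) / (1+x\<^sup>2)) \<partial>lborel)" .
  moreover have "ennreal (pi / sin (pi * (a/2))) = 2 * ennreal (pi / (2 * sin (pi * a / 2)))"
  proof -
    have "pi / sin (pi * (a/2)) = 2 * (pi / (2 * sin (pi * a / 2)))" using sp by (simp add: field_simps)
    hence "ennreal (pi / sin (pi * (a/2))) = ennreal (2 * (pi / (2 * sin (pi * a / 2))))"
      by (rule arg_cong[where f=ennreal])
    also have "\<dots> = 2 * ennreal (pi / (2 * sin (pi * a / 2)))" by (subst ennreal_mult') simp_all
    finally show ?thesis .
  qed
  ultimately have "2 * (\<integral>\<^sup>+x. ennreal (indicator {0..} x * x powr (a-1) / (1+x\<^sup>2)) \<partial>lborel) = 2 * ennreal (pi / (2 * sin (pi * a / 2)))"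
    by simp
  thus ?thesis by (subst (asm) ennreal_mult_cancel_left) auto
qed

lemma laplace_one_minus_cos:
  fixes x :: real assumes x: "x > 0"
  shows "(\<integral>\<^sup>+u. ennreal (indicator {0..} u * ((1 - cos u) * exp (-(x*u)))) \<partial>lborel)
       = ennreal (1 / (x * (1 + x\<^sup>2)))"
proof -
  have pos: "1 + x\<^sup>2 > 0" by (simp add: add_pos_nonneg)
  define G where "G u = - (1 / x) - (sin u - x * cos u) / (1 + x\<^sup>2)" for u
  define F where "F u = exp (-(x*u)) * G u" for u
  have G_bound: "norm (G u) \<le> 1 / x + (1 + x) / (1 + x\<^sup>2)" for u
  proof -
    have "\<bar>x * cos u\<bar> \<le> x" using x abs_cos_le_one[of u] by (simp add: abs_mult mult_left_le)
    hence "\<bar>sin u - x * cos u\<bar> \<le> 1 + x"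
      using abs_triangle_ineq4[of "sin u" "x * cos u"] abs_sin_le_one[of u] by linarith
    hence bound: "\<bar>(sin u - x * cos u) / (1 + x\<^sup>2)\<bar> \<le> (1 + x) / (1 + x\<^sup>2)"
      using pos by (simp add: divide_right_mono)
    have "norm (G u) \<le> \<bar>- (1 / x)\<bar> + \<bar>(sin u - x * cos u) / (1 + x\<^sup>2)\<bar>"
      unfolding G_def real_norm_def by (rule abs_triangle_ineq4)
    also have "\<dots> \<le> 1 / x + (1 + x) / (1 + x\<^sup>2)"
      using x bound by (intro add_mono) auto
    finally show ?thesis .
  qed
  have G_deriv: "(G has_real_derivative - (cos u + x * sin u) / (1 + x\<^sup>2)) (at u)" for u
    unfolding G_def using pos by (auto intro!: derivative_eq_intros simp: diff_divide_distrib)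
  have "(\<integral>\<^sup>+u. ennreal (indicator {0..} u * ((1 - cos u) * exp (-(x*u)))) \<partial>lborel)
      = (\<integral>\<^sup>+u. ennreal ((1 - cos u) * exp (-(x*u))) * indicator {0..} u \<partial>lborel)"
    by (intro nn_integral_cong) (auto simp: indicator_def)
  also have "\<dots> = ennreal (0 - F 0)"
  proof (rule nn_integral_FTC_atLeast)
    show "(\<lambda>u. (1 - cos u) * exp (-(x*u))) \<in> borel_measurable borel" by measurable
    show "0 \<le> (1 - cos u) * exp (-(x*u))" for u by simp
    show "(F has_real_derivative (1 - cos u) * exp (-(x*u))) (at u)" for u
    proof -
      have deriv: "(F has_real_derivative
          - x * exp (-(x*u)) * G u + exp (-(x*u)) * (- (cos u + x * sin u) / (1 + x\<^sup>2))) (at u)"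
        unfolding F_def by (auto intro!: derivative_eq_intros G_deriv)
      have sum_eq: "- x * G u + (- (cos u + x * sin u) / (1 + x\<^sup>2)) = 1 - cos u"
      proof -
        have "- x * G u = 1 + (x * sin u - x\<^sup>2 * cos u) / (1 + x\<^sup>2)"
          unfolding G_def using x by (simp add: field_simps power2_eq_square)
        moreover have "(x * sin u - x\<^sup>2 * cos u) + (- (cos u + x * sin u)) = - cos u * (1 + x\<^sup>2)"
          by (simp add: algebra_simps)
        hence "(x * sin u - x\<^sup>2 * cos u) / (1 + x\<^sup>2) + (- (cos u + x * sin u)) / (1 + x\<^sup>2) = - cos u"
          using pos by (simp only: add_divide_distrib[symmetric])
                       (simp add: order.strict_implies_not_eq[OF pos, symmetric])
        ultimately show ?thesis by (simp only: minus_mult_left)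
      qed
      have "- x * exp (-(x*u)) * G u + exp (-(x*u)) * (- (cos u + x * sin u) / (1 + x\<^sup>2))
          = exp (-(x*u)) * (- x * G u + (- (cos u + x * sin u) / (1 + x\<^sup>2)))"
        by (simp only: distrib_left mult_ac)
      also have "\<dots> = (1 - cos u) * exp (-(x*u))" by (simp only: sum_eq) (rule mult.commute)
      finally have eq: "- x * exp (-(x*u)) * G u + exp (-(x*u)) * (- (cos u + x * sin u) / (1 + x\<^sup>2))
          = (1 - cos u) * exp (-(x*u))" .
      show ?thesis using deriv unfolding eq .
    qed
    show "(F \<longlongrightarrow> 0) at_top"
    proof (rule tendsto_0_le[OF tendsto_exp_neg_mult_at_top[OF x]])
      show "\<forall>\<^sub>F u in at_top. norm (F u) \<le> norm (exp (-(x*u))) * (1 / x + (1 + x) / (1 + x\<^sup>2))"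
        unfolding F_def norm_mult by (intro always_eventually allI mult_left_mono G_bound) simp
    qed
  qed
  also have "0 - F 0 = 1 / (x * (1 + x\<^sup>2))"
    unfolding F_def G_def using x pos by (simp add: field_simps power2_eq_square)
  finally show ?thesis .
qed

text \<open>Half-line version of the key integral: write \<open>u powr (-a-1)\<close> as a Laplace transform,
  exchange the integrals and use the two previous lemmas.\<close>
lemma nn_integral_one_minus_cos_half_line:
  fixes a :: real assumes a0: "0 < a" and a2: "a < 2"
  shows "(\<integral>\<^sup>+u. ennreal (indicator {0..} u * ((1 - cos u) * u powr (-a-1))) \<partial>lborel)
       = ennreal (pi / (2 * Gamma (a+1) * sin (pi * a / 2)))"
proof -
  define G where "G = Gamma (a+1)"
  have G: "G > 0" unfolding G_def using a0 by (intro Gamma_real_pos) simp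
  have sp: "sin (pi * a / 2) > 0" using a0 a2 by (intro sin_gt_zero) auto
  have "(\<integral>\<^sup>+u. ennreal (indicator {0..} u * ((1 - cos u) * u powr (-a-1))) \<partial>lborel)
      = (\<integral>\<^sup>+u. ennreal (1/G) * ennreal (indicator {0..} u * (1 - cos u)) *
            (\<integral>\<^sup>+x. ennreal (indicator {0..} x * x powr ((a+1)-1) * exp (-(u*x))) \<partial>lborel) \<partial>lborel)"
  proof (intro nn_integral_cong)
    fix u :: real
    show "ennreal (indicator {0..} u * ((1 - cos u) * u powr (-a-1))) = ennreal (1/G) * ennreal (indicator {0..} u * (1 - cos u)) *
            (\<integral>\<^sup>+x. ennreal (indicator {0..} x * x powr ((a+1)-1) * exp (-(u*x))) \<partial>lborel)"
    proof (cases "u > 0")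
      case True
      have mm: "-1-a = -a-1" by simp
      have "(\<integral>\<^sup>+x. ennreal (indicator {0..} x * x powr ((a+1)-1) * exp (-(u*x))) \<partial>lborel) = ennreal (G * u powr (-(a+1)))"
        unfolding G_def using True a0 by (intro nn_integral_powr_exp_scaled) auto
      moreover have "ennreal (indicator {0..} u * ((1 - cos u) * u powr (-a-1))) = ennreal (1/G) * ennreal (indicator {0..} u * (1 - cos u)) *
            ennreal (G * u powr (-(a+1)))"
        using True G by (simp add: ennreal_mult'[symmetric] indicator_def field_simps) (simp add: mm)
      ultimately show ?thesis by simp
    next
      case False
      hence "indicator {0..} u * (1 - cos u) = 0" by (cases "u = 0") (auto simp: indicator_def)
      with False show ?thesis by (cases "u = 0") (auto simp: indicator_def)
    qed
  qed
  also have "\<dots> = (\<integral>\<^sup>+u. \<integral>\<^sup>+x. ennreal (1/G) * ennreal (indicator {0..} x * x powr a * (indicator {0..} u * ((1 - cos u) * exp (-(x*u))))) \<partial>lborel \<partial>lborel)"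
    by (subst nn_integral_cmult[symmetric])
       (auto intro!: nn_integral_cong simp: ennreal_mult'[symmetric] indicator_def mult_ac)
  also have "\<dots> = (\<integral>\<^sup>+x. \<integral>\<^sup>+u. ennreal (1/G) * ennreal (indicator {0..} x * x powr a * (indicator {0..} u * ((1 - cos u) * exp (-(x*u))))) \<partial>lborel \<partial>lborel)"
    by (subst lborel_pair.Fubini') (auto simp: case_prod_unfold)
  also have "\<dots> = (\<integral>\<^sup>+x. ennreal (1/G) * ennreal (indicator {0..} x * x powr a) *
                 (\<integral>\<^sup>+u. ennreal (indicator {0..} u * ((1 - cos u) * exp (-(x*u)))) \<partial>lborel) \<partial>lborel)"
    by (subst nn_integral_cmult[symmetric])
       (auto intro!: nn_integral_cong simp: ennreal_mult'[symmetric] indicator_def mult_ac)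
  also have "\<dots> = (\<integral>\<^sup>+x. ennreal (1/G) * ennreal (indicator {0..} x * x powr (a-1) / (1+x\<^sup>2)) \<partial>lborel)"
  proof (intro nn_integral_cong)
    fix x :: real
    show "ennreal (1/G) * ennreal (indicator {0..} x * x powr a) *
                 (\<integral>\<^sup>+u. ennreal (indicator {0..} u * ((1 - cos u) * exp (-(x*u)))) \<partial>lborel)
        = ennreal (1/G) * ennreal (indicator {0..} x * x powr (a-1) / (1+x\<^sup>2))"
    proof (cases "x > 0")
      case True
      have pos: "1 + x\<^sup>2 > 0" by (simp add: add_pos_nonneg)
      have "x powr a = x * x powr (a-1)" using powr_mult_base[of x "a-1"] True by simp
      hence "x powr a * (1 / (x * (1 + x\<^sup>2))) = x powr (a-1) / (1+x\<^sup>2)"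
        using True pos by simp
      hence "ennreal (indicator {0..} x * x powr a) * ennreal (1 / (x * (1 + x\<^sup>2)))
          = ennreal (indicator {0..} x * x powr (a-1) / (1+x\<^sup>2))"
        using True by (simp add: ennreal_mult'[symmetric] indicator_def)
      thus ?thesis using True by (simp add: laplace_one_minus_cos mult.assoc)
    next
      case False thus ?thesis using a0 by (cases "x = 0") (auto simp: indicator_def)
    qed
  qed
  also have "\<dots> = ennreal (1/G) * ennreal (pi / (2 * sin (pi * a / 2)))"
    using a0 a2 by (subst nn_integral_cmult) (auto simp: nn_integral_powr_over_1_plus_sq)
  also have "\<dots> = ennreal (pi / (2 * Gamma (a+1) * sin (pi * a / 2)))"
    using G sp by (subst ennreal_mult'[symmetric]) (auto simp: G_def field_simps)
  finally show ?thesis .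
qed

text \<open>The constant \<open>C(a)\<close> with \<open>\<integral> (1 - cos (xu)) |u| powr (-a-1) du = C(a) |x| powr a\<close>.\<close>
definition spectral_const :: "real \<Rightarrow> real" where
  "spectral_const a = pi / (Gamma (a+1) * sin (pi * a / 2))"

lemma spectral_const_pos: "0 < a \<Longrightarrow> a < 2 \<Longrightarrow> spectral_const a > 0"
  unfolding spectral_const_def by (intro divide_pos_pos mult_pos_pos Gamma_real_pos sin_gt_zero) auto

lemma nn_integral_one_minus_cos:
  fixes a :: real assumes a0: "0 < a" and a2: "a < 2"
  shows "(\<integral>\<^sup>+u. ennreal ((1 - cos u) * \<bar>u\<bar> powr (-a-1)) \<partial>lborel) = ennreal (spectral_const a)"
proof -
  define g where "g u = (1 - cos u) * \<bar>u\<bar> powr (-a-1)" for u :: real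
  have geven: "g (-u) = g u" for u unfolding g_def by simp
  have gz: "g 0 = 0" unfolding g_def by simp
  have [measurable]: "g \<in> borel_measurable borel" unfolding g_def by measurable
  have "(\<integral>\<^sup>+u. ennreal (g u) \<partial>lborel) = (\<integral>\<^sup>+u. ennreal (indicator {0..} u * g u) + ennreal (indicator {..<0} u * g u) \<partial>lborel)"
    by (intro nn_integral_cong) (auto simp: indicator_def)
  also have "\<dots> = (\<integral>\<^sup>+u. ennreal (indicator {0..} u * g u) \<partial>lborel) + (\<integral>\<^sup>+u. ennreal (indicator {..<0} u * g u) \<partial>lborel)"
    by (rule nn_integral_add) auto
  also have "(\<integral>\<^sup>+u. ennreal (indicator {..<0} u * g u) \<partial>lborel) = ennreal \<bar>-1\<bar> * (\<integral>\<^sup>+u. ennreal (indicator {..<0} (0 + (-1) * u) * g (0 + (-1) * u)) \<partial>lborel)"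
    by (rule nn_integral_real_affine) auto
  also have "\<dots> = (\<integral>\<^sup>+u. ennreal (indicator {0..} u * g u) \<partial>lborel)"
    by (auto intro!: nn_integral_cong simp: indicator_def geven gz)
  also have "(\<integral>\<^sup>+u. ennreal (indicator {0..} u * g u) \<partial>lborel) = ennreal (pi / (2 * Gamma (a+1) * sin (pi * a / 2)))"
  proof -
    have "(\<integral>\<^sup>+u. ennreal (indicator {0..} u * g u) \<partial>lborel) = (\<integral>\<^sup>+u. ennreal (indicator {0..} u * ((1 - cos u) * u powr (-a-1))) \<partial>lborel)"
      by (intro nn_integral_cong) (auto simp: indicator_def g_def)
    thus ?thesis using nn_integral_one_minus_cos_half_line[OF a0 a2] by simp
  qed
  also have "ennreal (pi / (2 * Gamma (a+1) * sin (pi * a / 2))) + ennreal (pi / (2 * Gamma (a+1) * sin (pi * a / 2))) = ennreal (spectral_const a)"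
  proof -
    have "spectral_const a = pi / (2 * Gamma (a+1) * sin (pi * a / 2)) + pi / (2 * Gamma (a+1) * sin (pi * a / 2))"
      unfolding spectral_const_def by (simp add: field_simps)
    moreover have "pi / (2 * Gamma (a+1) * sin (pi * a / 2)) \<ge> 0"
      using a0 a2 by (intro divide_nonneg_pos mult_pos_pos Gamma_real_pos sin_gt_zero) auto
    ultimately show ?thesis by (simp add: ennreal_plus[symmetric] del: ennreal_plus)
  qed
  finally show ?thesis unfolding g_def .
qed

lemma nn_integral_one_minus_cos_scaled:
  fixes a x :: real assumes a0: "0 < a" and a2: "a < 2"
  shows "(\<integral>\<^sup>+u. ennreal ((1 - cos (x*u)) * \<bar>u\<bar> powr (-a-1)) \<partial>lborel) = ennreal (spectral_const a * \<bar>x\<bar> powr a)"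
proof (cases "x = 0")
  case True thus ?thesis by simp
next
  case False
  define g where "g u = (1 - cos u) * \<bar>u\<bar> powr (-a-1)" for u :: real
  have [measurable]: "g \<in> borel_measurable borel" unfolding g_def by measurable
  have ax: "\<bar>x\<bar> > 0" using False by simp
  have "ennreal (spectral_const a) = (\<integral>\<^sup>+u. ennreal (g u) \<partial>lborel)"
    unfolding g_def by (rule nn_integral_one_minus_cos[OF a0 a2, symmetric])
  also have "\<dots> = ennreal \<bar>x\<bar> * (\<integral>\<^sup>+u. ennreal (g (0 + x * u)) \<partial>lborel)"
    by (rule nn_integral_real_affine) (use False in auto)
  also have "\<dots> = ennreal \<bar>x\<bar> * (\<integral>\<^sup>+u. ennreal (\<bar>x\<bar> powr (-a-1)) * ennreal ((1 - cos (x*u)) * \<bar>u\<bar> powr (-a-1)) \<partial>lborel)"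
    by (auto intro!: nn_integral_cong simp: g_def ennreal_mult'[symmetric] abs_mult powr_mult mult_ac)
  also have "\<dots> = ennreal (\<bar>x\<bar> * \<bar>x\<bar> powr (-a-1)) * (\<integral>\<^sup>+u. ennreal ((1 - cos (x*u)) * \<bar>u\<bar> powr (-a-1)) \<partial>lborel)"
    by (subst nn_integral_cmult) (auto simp: ennreal_mult' mult.assoc)
  also have "\<bar>x\<bar> * \<bar>x\<bar> powr (-a-1) = \<bar>x\<bar> powr (-a)"
    using powr_mult_base[of "\<bar>x\<bar>" "-a-1"] by simp
  finally have eq: "ennreal (spectral_const a) = ennreal (\<bar>x\<bar> powr (-a)) * (\<integral>\<^sup>+u. ennreal ((1 - cos (x*u)) * \<bar>u\<bar> powr (-a-1)) \<partial>lborel)" .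
  have "ennreal (spectral_const a * \<bar>x\<bar> powr a) = ennreal (\<bar>x\<bar> powr a) * ennreal (spectral_const a)"
    using spectral_const_pos[OF a0 a2] by (simp add: ennreal_mult'[symmetric] mult.commute)
  also have "\<dots> = ennreal (\<bar>x\<bar> powr a * \<bar>x\<bar> powr (-a)) * (\<integral>\<^sup>+u. ennreal ((1 - cos (x*u)) * \<bar>u\<bar> powr (-a-1)) \<partial>lborel)"
    by (subst eq) (simp add: ennreal_mult' mult.assoc)
  also have "\<bar>x\<bar> powr a * \<bar>x\<bar> powr (-a) = 1" using ax by (simp add: powr_add[symmetric])
  finally show ?thesis by simp
qed

lemma has_bochner_integral_one_minus_cos:
  fixes a x :: real assumes a0: "0 < a" and a2: "a < 2"
  shows "has_bochner_integral lborel (\<lambda>u. (1 - cos (x*u)) * \<bar>u\<bar> powr (-a-1)) (spectral_const a * \<bar>x\<bar> powr a)"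
proof (rule has_bochner_integral_nn_integral)
  show "(\<lambda>u. (1 - cos (x*u)) * \<bar>u\<bar> powr (-a-1)) \<in> borel_measurable lborel" by measurable
  show "AE u in lborel. 0 \<le> (1 - cos (x*u)) * \<bar>u\<bar> powr (-a-1)" by simp
  show "0 \<le> spectral_const a * \<bar>x\<bar> powr a" using spectral_const_pos[OF a0 a2] by simp
  show "(\<integral>\<^sup>+u. ennreal ((1 - cos (x*u)) * \<bar>u\<bar> powr (-a-1)) \<partial>lborel) = ennreal (spectral_const a * \<bar>x\<bar> powr a)"
    by (rule nn_integral_one_minus_cos_scaled[OF a0 a2])
qed

text \<open>Spectral representation of the fractional Brownian covariance kernel
  \<open>|x|\<^sup>a + |y|\<^sup>a - |x - y|\<^sup>a\<close> (for \<open>0 < a < 2\<close>), obtained by polarisation of the previous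
  lemma.\<close>
lemma has_bochner_integral_fbm_covariance:
  fixes a x y :: real assumes a0: "0 < a" and a2: "a < 2"
  shows "has_bochner_integral lborel (\<lambda>u. (cos ((x - y)*u) - cos (x*u) - cos (y*u) + 1) * \<bar>u\<bar> powr (-a-1))
           (spectral_const a * (\<bar>x\<bar> powr a + \<bar>y\<bar> powr a - \<bar>x - y\<bar> powr a))"
proof -
  have "has_bochner_integral lborel
          (\<lambda>u. (1 - cos (x*u)) * \<bar>u\<bar> powr (-a-1) + (1 - cos (y*u)) * \<bar>u\<bar> powr (-a-1)
                - (1 - cos ((x-y)*u)) * \<bar>u\<bar> powr (-a-1))
          (spectral_const a * \<bar>x\<bar> powr a + spectral_const a * \<bar>y\<bar> powr a - spectral_const a * \<bar>x - y\<bar> powr a)"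
    by (intro has_bochner_integral_diff has_bochner_integral_add has_bochner_integral_one_minus_cos a0 a2)
  thus ?thesis by (simp add: algebra_simps)
qed

section \<open>Trigonometric sums at infinity and linear independence of the kernels\<close>

lemma exp_i_ne_1:
  fixes x :: real assumes "x \<noteq> 0" "\<bar>x\<bar> < 2 * pi"
  shows "exp (\<i> * complex_of_real x) \<noteq> 1"
proof
  assume "exp (\<i> * complex_of_real x) = 1"
  then obtain n :: int where n: "x = 2 * pi * of_int n"
    by (auto simp: exp_eq_1)
  with assms have "n \<noteq> 0" by auto
  hence "\<bar>of_int n\<bar> \<ge> (1::real)" by linarith
  hence "\<bar>x\<bar> \<ge> 2 * pi" using n pi_gt_zero by (simp add: abs_mult)
  with assms show False by simp
qed

text \<open>For finitely many frequencies \<open>\<omega> \<noteq> w\<^sub>0\<close> there is a shift \<open>d\<close> that separates each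
  \<open>exp (\<i>\<omega>d)\<close> from \<open>exp (\<i>w\<^sub>0d)\<close>; this drives the elimination of frequencies below.\<close>
lemma exists_separating_shift:
  fixes F :: "real set" assumes fin: "finite F" and w0: "w0 \<notin> F"
  shows "\<exists>d. \<forall>\<omega>\<in>F. exp (\<i> * complex_of_real ((\<omega> - w0) * d)) \<noteq> 1"
proof (intro exI ballI)
  define S where "S = 1 + (\<Sum>\<omega>\<in>F. \<bar>\<omega> - w0\<bar>)"
  have "0 \<le> (\<Sum>\<omega>\<in>F. \<bar>\<omega> - w0\<bar>)" by (intro sum_nonneg) simp
  hence S: "S > 0" unfolding S_def by linarith
  fix \<omega> assume \<omega>: "\<omega> \<in> F"
  have "\<bar>\<omega> - w0\<bar> \<le> (\<Sum>\<omega>\<in>F. \<bar>\<omega> - w0\<bar>)"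
    using \<omega> fin by (intro member_le_sum) auto
  hence "\<bar>\<omega> - w0\<bar> / S < 1" using S unfolding S_def by simp
  hence "pi * (\<bar>\<omega> - w0\<bar> / S) < pi * 1" by (intro mult_strict_left_mono) auto
  moreover have "\<bar>(\<omega> - w0) * (pi / S)\<bar> = pi * (\<bar>\<omega> - w0\<bar> / S)"
    using S by (simp add: abs_mult)
  ultimately have "\<bar>(\<omega> - w0) * (pi / S)\<bar> < pi" by simp
  also have "pi < 2 * pi" by simp
  finally have "\<bar>(\<omega> - w0) * (pi / S)\<bar> < 2 * pi" .
  moreover have "(\<omega> - w0) * (pi / S) \<noteq> 0" using \<omega> w0 S by auto
  ultimately show "exp (\<i> * complex_of_real ((\<omega> - w0) * (pi / S))) \<noteq> 1"
    by (rule exp_i_ne_1[rotated])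
qed

text \<open>Induction on the frequencies: \<open>Q (u + d) - exp (\<i>w\<^sub>0d) Q u\<close> eliminates the frequency \<open>w\<^sub>0\<close>
  and rescales the others by nonzero factors.\<close>
lemma trig_sum_tendsto_zero_imp_zero:
  fixes F :: "real set" and c :: "real \<Rightarrow> complex"
  assumes "finite F" and "((\<lambda>u. \<Sum>\<omega>\<in>F. c \<omega> * exp (\<i> * complex_of_real (\<omega> * u))) \<longlongrightarrow> 0) at_top"
  shows "\<forall>\<omega>\<in>F. c \<omega> = 0"
  using assms
proof (induction F arbitrary: c rule: finite_induct)
  case empty thus ?case by simp
next
  case (insert w0 F)
  define E where "E \<omega> u = exp (\<i> * complex_of_real (\<omega> * u))" for \<omega> u :: real
  define Q where "Q u = (\<Sum>\<omega>\<in>insert w0 F. c \<omega> * E \<omega> u)" for u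
  have Qlim: "(Q \<longlongrightarrow> 0) at_top" using insert.prems unfolding Q_def E_def .
  obtain d where d: "\<forall>\<omega>\<in>F. E (\<omega> - w0) d \<noteq> 1"
    using exists_separating_shift[OF insert.hyps] unfolding E_def by blast
  have E_add: "E \<omega> (u + v) = E \<omega> u * E \<omega> v" "E (\<omega> + \<omega>') u = E \<omega> u * E \<omega>' u" for \<omega> \<omega>' u v
    unfolding E_def by (simp_all add: exp_add[symmetric] algebra_simps)
  have shift: "Q (u + d) - E w0 d * Q u = (\<Sum>\<omega>\<in>F. (c \<omega> * (E \<omega> d - E w0 d)) * E \<omega> u)" for u
  proof -
    have "Q (u + d) = c w0 * (E w0 d * E w0 u) + (\<Sum>\<omega>\<in>F. c \<omega> * (E \<omega> d * E \<omega> u))"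
      unfolding Q_def using insert.hyps by (simp add: E_add mult.commute)
    moreover have "E w0 d * Q u = c w0 * (E w0 d * E w0 u) + (\<Sum>\<omega>\<in>F. c \<omega> * (E w0 d * E \<omega> u))"
      unfolding Q_def using insert.hyps by (simp add: sum_distrib_left distrib_left mult_ac)
    ultimately show ?thesis
      by (simp add: algebra_simps flip: sum_subtractf)
  qed
  have "((\<lambda>u. Q (u + d) - E w0 d * Q u) \<longlongrightarrow> 0) at_top"
  proof -
    have "((\<lambda>u. Q (u + d)) \<longlongrightarrow> 0) at_top"
      by (rule filterlim_compose[OF Qlim])
         (use filterlim_tendsto_add_at_top[OF tendsto_const[of d] filterlim_ident] in \<open>simp add: add.commute\<close>)
    from tendsto_diff[OF this tendsto_mult[OF tendsto_const Qlim]] show ?thesis by simp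
  qed
  hence "\<forall>\<omega>\<in>F. c \<omega> * (E \<omega> d - E w0 d) = 0"
    unfolding shift by (intro insert.IH) (simp only: E_def)
  moreover have "E \<omega> d - E w0 d \<noteq> 0" if "\<omega> \<in> F" for \<omega>
    using d that E_add(2)[of "\<omega> - w0" w0 d] by (auto simp: E_def)
  ultimately have cF: "\<forall>\<omega>\<in>F. c \<omega> = 0" by auto
  hence "Q u = c w0 * E w0 u" for u
    unfolding Q_def using insert.hyps by simp
  hence "((\<lambda>u. norm (c w0)) \<longlongrightarrow> 0) (at_top :: real filter)"
    using tendsto_norm[OF Qlim] by (simp add: norm_mult E_def)
  hence "c w0 = 0" by (simp add: tendsto_const_iff)
  with cF show ?case by auto
qed

text \<open>The functions \<open>u \<mapsto> exp (\<i>tu) - 1\<close> for distinct nonzero \<open>t\<close> are linearly independent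
  at infinity: reduce to the previous lemma with the extra frequency \<open>0\<close>.\<close>
lemma exp_minus_one_sum_tendsto_zero_imp_zero:
  fixes G :: "'i set" and t b :: "'i \<Rightarrow> real"
  assumes finG: "finite G" and injG: "inj_on t G" and tnz: "\<forall>j\<in>G. t j \<noteq> 0"
    and lim: "((\<lambda>u. \<Sum>j\<in>G. complex_of_real (b j) * (exp (\<i> * complex_of_real (t j * u)) - 1)) \<longlongrightarrow> 0) at_top"
  shows "\<forall>j\<in>G. b j = 0"
proof -
  define F where "F = insert 0 (t ` G)"
  define c where "c \<omega> = (if \<omega> = 0 then - complex_of_real (\<Sum>j\<in>G. b j)
                          else complex_of_real (b (the_inv_into G t \<omega>)))" for \<omega>
  have tG0: "0 \<notin> t ` G" using tnz by auto
  have ct: "c (t j) = complex_of_real (b j)" if "j \<in> G" for j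
    using that tnz injG unfolding c_def by (auto simp: the_inv_into_f_f)
  have trig: "(\<Sum>j\<in>G. complex_of_real (b j) * (exp (\<i> * complex_of_real (t j * u)) - 1))
      = (\<Sum>\<omega>\<in>F. c \<omega> * exp (\<i> * complex_of_real (\<omega> * u)))" for u
  proof -
    have "(\<Sum>\<omega>\<in>F. c \<omega> * exp (\<i> * complex_of_real (\<omega> * u)))
        = c 0 + (\<Sum>\<omega>\<in>t ` G. c \<omega> * exp (\<i> * complex_of_real (\<omega> * u)))"
      unfolding F_def using tG0 finG by (subst sum.insert) auto
    also have "(\<Sum>\<omega>\<in>t ` G. c \<omega> * exp (\<i> * complex_of_real (\<omega> * u)))
        = (\<Sum>j\<in>G. complex_of_real (b j) * exp (\<i> * complex_of_real (t j * u)))"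
      by (subst sum.reindex[OF injG]) (auto intro!: sum.cong simp: ct)
    finally show ?thesis
      unfolding c_def by (simp add: algebra_simps sum_subtractf)
  qed
  have "\<forall>\<omega>\<in>F. c \<omega> = 0"
    using finG lim unfolding trig F_def by (intro trig_sum_tendsto_zero_imp_zero) auto
  thus ?thesis using ct unfolding F_def by auto
qed

lemma exp_minus_one_powr_tendsto_zero:
  fixes b t p :: real assumes p: "p < 0"
  shows "((\<lambda>u. complex_of_real b * (exp (\<i> * complex_of_real (t * u)) - 1) * complex_of_real (u powr p))
           \<longlongrightarrow> 0) at_top"
proof (rule tendsto_0_le[OF tendsto_neg_powr[OF p filterlim_ident], where K = "2 * \<bar>b\<bar>"])
  show "\<forall>\<^sub>F u in at_top. norm (complex_of_real b * (exp (\<i> * complex_of_real (t * u)) - 1)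
                                * complex_of_real (u powr p)) \<le> norm (u powr p) * (2 * \<bar>b\<bar>)"
  proof (intro always_eventually allI)
    fix u :: real
    have bound: "norm (exp (\<i> * complex_of_real (t * u)) - 1) \<le> 2"
      using norm_triangle_ineq4[of "exp (\<i> * complex_of_real (t * u))" 1] by simp
    have "norm (complex_of_real b * (exp (\<i> * complex_of_real (t * u)) - 1) * complex_of_real (u powr p))
        = (\<bar>b\<bar> * norm (u powr p)) * norm (exp (\<i> * complex_of_real (t * u)) - 1)"
      by (simp add: norm_mult mult_ac del: of_real_mult)
    also have "\<dots> \<le> (\<bar>b\<bar> * norm (u powr p)) * 2"
      by (rule mult_left_mono[OF bound]) simp
    finally show "norm (complex_of_real b * (exp (\<i> * complex_of_real (t * u)) - 1) * complex_of_real (u powr p))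
        \<le> norm (u powr p) * (2 * \<bar>b\<bar>)" by (simp add: mult_ac)
  qed
qed

text \<open>Multiplying by \<open>u powr \<alpha>\<close>, \<open>\<alpha>\<close> the least exponent among nonzero coefficients, the
  terms with \<open>p\<^sub>j > \<alpha>\<close> vanish at infinity, so the terms with \<open>p\<^sub>j = \<alpha>\<close> do as well.\<close>
lemma exp_minus_one_powr_sum_indep:
  fixes J :: "'i set" and t p b :: "'i \<Rightarrow> real"
  assumes fin: "finite J" and inj: "inj_on t J" and tnz: "\<forall>j\<in>J. t j \<noteq> 0"
    and Z: "\<And>u. u > 0 \<Longrightarrow> (\<Sum>j\<in>J. complex_of_real (b j) * (exp (\<i> * complex_of_real (t j * u)) - 1)
                                    * complex_of_real (u powr (- p j))) = 0"
  shows "\<forall>j\<in>J. b j = 0"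
proof (rule ccontr)
  assume "\<not> (\<forall>j\<in>J. b j = 0)"
  define S where "S = {j\<in>J. b j \<noteq> 0}"
  have Sne: "S \<noteq> {}" and finS: "finite S" and SJ: "S \<subseteq> J"
    using \<open>\<not> (\<forall>j\<in>J. b j = 0)\<close> fin unfolding S_def by auto
  define \<alpha> where "\<alpha> = Min (p ` S)"
  define G where "G = {j\<in>S. p j = \<alpha>}"
  have \<alpha>_le: "\<alpha> \<le> p j" if "j \<in> S" for j unfolding \<alpha>_def using that finS by auto
  have "\<alpha> \<in> p ` S" unfolding \<alpha>_def using finS Sne by (intro Min_in) auto
  then obtain j0 where j0: "j0 \<in> G" unfolding G_def by auto
  have finG: "finite G" and GJ: "G \<subseteq> J" using finS SJ unfolding G_def by auto
  define scaled where "scaled j u = complex_of_real (b j) * (exp (\<i> * complex_of_real (t j * u)) - 1)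
                                 * complex_of_real (u powr (\<alpha> - p j))" for j u
  have split: "(\<Sum>j\<in>G. complex_of_real (b j) * (exp (\<i> * complex_of_real (t j * u)) - 1))
      = - (\<Sum>j\<in>S - G. scaled j u)" if u: "u > 0" for u
  proof -
    have "0 = complex_of_real (u powr \<alpha>) * (\<Sum>j\<in>J. complex_of_real (b j) * (exp (\<i> * complex_of_real (t j * u)) - 1)
                                    * complex_of_real (u powr (- p j)))"
      using Z[OF u] by simp
    also have "\<dots> = (\<Sum>j\<in>J. scaled j u)"
      unfolding sum_distrib_left scaled_def using u
      by (intro sum.cong refl) (simp add: powr_add[symmetric] of_real_mult[symmetric] mult_ac del: of_real_mult)
    also have "\<dots> = (\<Sum>j\<in>S. scaled j u)"
      using SJ fin by (intro sum.mono_neutral_right) (auto simp: S_def scaled_def)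
    also have "\<dots> = (\<Sum>j\<in>G. scaled j u) + (\<Sum>j\<in>S - G. scaled j u)"
      using finS by (subst sum.subset_diff[of G S]) (auto simp: G_def)
    also have "(\<Sum>j\<in>G. scaled j u) = (\<Sum>j\<in>G. complex_of_real (b j) * (exp (\<i> * complex_of_real (t j * u)) - 1))"
      using u by (intro sum.cong refl) (auto simp: G_def scaled_def)
    finally show ?thesis by (simp add: eq_neg_iff_add_eq_0 add.commute)
  qed
  have "((\<lambda>u. \<Sum>j\<in>S - G. scaled j u) \<longlongrightarrow> 0) at_top"
  proof (rule tendsto_null_sum)
    fix j assume "j \<in> S - G"
    hence "\<alpha> - p j < 0" using \<alpha>_le[of j] unfolding G_def by auto
    thus "((\<lambda>u. scaled j u) \<longlongrightarrow> 0) at_top"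
      unfolding scaled_def by (rule exp_minus_one_powr_tendsto_zero)
  qed
  from tendsto_minus[OF this]
  have "((\<lambda>u. - (\<Sum>j\<in>S - G. scaled j u)) \<longlongrightarrow> 0) at_top" by simp
  moreover have "\<forall>\<^sub>F u in at_top. - (\<Sum>j\<in>S - G. scaled j u)
      = (\<Sum>j\<in>G. complex_of_real (b j) * (exp (\<i> * complex_of_real (t j * u)) - 1))"
    using eventually_gt_at_top[of 0] by eventually_elim (rule split[symmetric])
  ultimately have "((\<lambda>u. \<Sum>j\<in>G. complex_of_real (b j) * (exp (\<i> * complex_of_real (t j * u)) - 1)) \<longlongrightarrow> 0) at_top"
    by (rule Lim_transform_eventually)
  moreover have "\<forall>j\<in>G. t j \<noteq> 0" using tnz GJ by auto
  ultimately have "\<forall>j\<in>G. b j = 0"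
    using exp_minus_one_sum_tendsto_zero_imp_zero[OF finG inj_on_subset[OF inj GJ]] by blast
  moreover have "b j0 \<noteq> 0" using j0 unfolding G_def S_def by simp
  ultimately show False using j0 by blast
qed

section \<open>The harmonizable representation of the normalized mBm\<close>

lemma c_mbm_pos: "0 < x \<Longrightarrow> x < 1 \<Longrightarrow> c_mbm x > 0"
  unfolding c_mbm_def
  by (intro real_sqrt_gt_zero divide_pos_pos mult_pos_pos Gamma_real_pos sin_gt_zero) auto

text \<open>The normalising constant is exactly the spectral constant: \<open>c\<^sub>x\<^sup>2 = 2 C(2x)\<close>.  This is
  what makes the harmonizable kernels below reproduce \<open>R_mbm\<close>.\<close>
lemma c_mbm_sq: "0 < x \<Longrightarrow> x < 1 \<Longrightarrow> (c_mbm x)\<^sup>2 = 2 * spectral_const (2 * x)"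
proof -
  assume x: "0 < x" "x < 1"
  have "2 * pi / (Gamma (2 * x + 1) * sin (pi * x)) > 0"
    using x by (intro divide_pos_pos mult_pos_pos Gamma_real_pos sin_gt_zero) auto
  thus ?thesis unfolding c_mbm_def spectral_const_def by (simp add: mult.commute)
qed

lemma R_mbm_eq:
  assumes h: "\<forall>x. 0 < h x \<and> h x < 1"
  shows "R_mbm h s r = spectral_const (h s + h r)
           * (\<bar>s\<bar> powr (h s + h r) + \<bar>r\<bar> powr (h s + h r) - \<bar>s - r\<bar> powr (h s + h r))
           / (c_mbm (h s) * c_mbm (h r))"
proof -
  define H where "H = (h s + h r) / 2"
  have H: "0 < H" "H < 1" using h[rule_format, of s] h[rule_format, of r] unfolding H_def by auto
  have "2 * H = h s + h r" unfolding H_def by simp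
  thus ?thesis unfolding R_mbm_def Let_def H_def[symmetric] using c_mbm_sq[OF H]
    by (simp add: field_simps)
qed

text \<open>The integrand of the harmonizable representation
  \<open>B(t) = \<integral> (exp (\<i>tu) - 1) / (c (h t) |u| powr (h t + 1/2)) W(du)\<close>.\<close>
definition mbm_kernel :: "(real \<Rightarrow> real) \<Rightarrow> real \<Rightarrow> real \<Rightarrow> complex" where
  "mbm_kernel h t u = (exp (\<i> * complex_of_real (t * u)) - 1) / complex_of_real (c_mbm (h t) * \<bar>u\<bar> powr (h t + 1/2))"

lemma mbm_kernel_inner:
  "Re (mbm_kernel h s u * cnj (mbm_kernel h r u))
     = (cos ((s - r) * u) - cos (s * u) - cos (r * u) + 1) * \<bar>u\<bar> powr (- (h s + h r) - 1)
       / (c_mbm (h s) * c_mbm (h r))"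
proof (cases "u = 0")
  case False
  define P where "P = \<bar>u\<bar> powr (h s + h r + 1)"
  have kernel: "mbm_kernel h x u = (cis (x * u) - 1) / complex_of_real (c_mbm (h x) * \<bar>u\<bar> powr (h x + 1/2))" for x
    by (simp add: mbm_kernel_def cis_conv_exp)
  have P_inv: "1 / P = \<bar>u\<bar> powr (- (h s + h r) - 1)"
    unfolding P_def powr_minus_divide[symmetric]
    by (rule arg_cong[where f = "\<lambda>x. \<bar>u\<bar> powr x"]) simp
  have "\<bar>u\<bar> powr (h s + 1/2) * \<bar>u\<bar> powr (h r + 1/2) = P"
    unfolding P_def by (subst powr_add[symmetric]) (rule arg_cong[where f = "\<lambda>x. \<bar>u\<bar> powr x"], simp)
  hence "Re (mbm_kernel h s u * cnj (mbm_kernel h r u))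
      = Re ((cis (s * u) - 1) * cnj (cis (r * u) - 1)) / (c_mbm (h s) * c_mbm (h r) * P)"
    unfolding kernel by (simp add: mult_ac)
  also have "Re ((cis (s * u) - 1) * cnj (cis (r * u) - 1)) = cos ((s - r) * u) - cos (s * u) - cos (r * u) + 1"
    by (simp add: left_diff_distrib cos_diff algebra_simps)
  also have "(cos ((s - r) * u) - cos (s * u) - cos (r * u) + 1) / (c_mbm (h s) * c_mbm (h r) * P)
      = (cos ((s - r) * u) - cos (s * u) - cos (r * u) + 1) * (1 / P) / (c_mbm (h s) * c_mbm (h r))"
    by simp
  finally show ?thesis unfolding P_inv .
qed (simp add: mbm_kernel_def)

lemma R_mbm_spectral:
  assumes h: "\<forall>x. 0 < h x \<and> h x < 1"
  shows "has_bochner_integral lborel (\<lambda>u. Re (mbm_kernel h s u * cnj (mbm_kernel h r u))) (R_mbm h s r)"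
proof -
  have "0 < h s + h r" "h s + h r < 2" using h[rule_format, of s] h[rule_format, of r] by auto
  from has_bochner_integral_divide_zero[OF has_bochner_integral_fbm_covariance[OF this, of s r],
        of "c_mbm (h s) * c_mbm (h r)"]
  show ?thesis unfolding mbm_kernel_inner R_mbm_eq[OF h] .
qed

lemma sum_Re_mult_cnj: "(\<Sum>j\<in>J. \<Sum>k\<in>J. Re (z j * cnj (z k))) = (cmod (\<Sum>j\<in>J. z j))\<^sup>2"
proof -
  have "complex_of_real ((cmod (\<Sum>j\<in>J. z j))\<^sup>2) = (\<Sum>j\<in>J. z j) * cnj (\<Sum>j\<in>J. z j)"
    by (rule complex_norm_square)
  also have "\<dots> = (\<Sum>j\<in>J. \<Sum>k\<in>J. z j * cnj (z k))"
    by (simp add: sum_product)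
  finally have "Re (complex_of_real ((cmod (\<Sum>j\<in>J. z j))\<^sup>2)) = Re (\<Sum>j\<in>J. \<Sum>k\<in>J. z j * cnj (z k))"
    by (rule arg_cong)
  thus ?thesis by simp
qed

lemma mbm_variance_spectral:
  assumes h: "\<forall>x. 0 < h x \<and> h x < 1" and fin: "finite J"
  shows "has_bochner_integral lborel
           (\<lambda>u. (cmod (\<Sum>j\<in>J. complex_of_real (\<beta> j) * mbm_kernel h (t j) u))\<^sup>2)
           (\<Sum>j\<in>J. \<Sum>k\<in>J. \<beta> j * \<beta> k * R_mbm h (t j) (t k))"
proof -
  have "has_bochner_integral lborel
          (\<lambda>u. \<Sum>j\<in>J. \<Sum>k\<in>J. \<beta> j * \<beta> k * Re (mbm_kernel h (t j) u * cnj (mbm_kernel h (t k) u)))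
          (\<Sum>j\<in>J. \<Sum>k\<in>J. \<beta> j * \<beta> k * R_mbm h (t j) (t k))"
    by (intro has_bochner_integral_sum has_bochner_integral_mult_right R_mbm_spectral[OF h])
  moreover have "(\<Sum>j\<in>J. \<Sum>k\<in>J. \<beta> j * \<beta> k * Re (mbm_kernel h (t j) u * cnj (mbm_kernel h (t k) u)))
      = (cmod (\<Sum>j\<in>J. complex_of_real (\<beta> j) * mbm_kernel h (t j) u))\<^sup>2" for u
    by (simp add: sum_Re_mult_cnj[symmetric] mult_ac)
  ultimately show ?thesis by simp
qed

text \<open>A continuous function that equals \<open>c\<close> almost everywhere equals \<open>c\<close> at every point:
  otherwise it avoids \<open>c\<close> on an interval of positive measure.\<close>
lemma AE_lborel_continuous_eq:
  fixes f :: "real \<Rightarrow> 'b::t1_space"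
  assumes AE: "AE u in lborel. f u = c" and cont: "isCont f u0"
  shows "f u0 = c"
proof (rule ccontr)
  assume "f u0 \<noteq> c"
  then obtain e where e: "e > 0" "\<And>y. dist u0 y < e \<Longrightarrow> f y \<noteq> c"
    using continuous_at_avoid[OF cont] by blast
  from AE obtain N where N: "{u. f u \<noteq> c} \<subseteq> N" "N \<in> sets lborel" "emeasure lborel N = 0"
    by (auto elim!: AE_E)
  have "{u0 - e<..<u0 + e} \<subseteq> N"
  proof
    fix y assume "y \<in> {u0 - e<..<u0 + e}"
    hence "dist u0 y < e" by (auto simp: dist_real_def)
    thus "y \<in> N" using e N(1) by auto
  qed
  hence "emeasure lborel {u0 - e<..<u0 + e} \<le> emeasure lborel N"
    using N(2) by (intro emeasure_mono) auto
  moreover have "emeasure lborel {u0 - e<..<u0 + e} = ennreal (2 * e)" using e by simp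
  ultimately show False using N(3) e by simp
qed

lemma mbm_kernel_indep:
  assumes h: "\<forall>x. 0 < h x \<and> h x < 1" and fin: "finite J" and inj: "inj_on t J"
    and tnz: "\<forall>j\<in>J. t j \<noteq> 0"
    and Z: "\<And>u. u > 0 \<Longrightarrow> (\<Sum>j\<in>J. complex_of_real (\<beta> j) * mbm_kernel h (t j) u) = 0"
  shows "\<forall>j\<in>J. \<beta> j = 0"
proof -
  define c where "c j = c_mbm (h (t j))" for j
  have c: "c j > 0" for j unfolding c_def using h by (intro c_mbm_pos) auto
  have "\<forall>j\<in>J. \<beta> j / c j = 0"
  proof (rule exp_minus_one_powr_sum_indep[OF fin inj tnz, where p = "\<lambda>j. h (t j) + 1/2"])
    fix u :: real assume u: "u > 0"
    have term_eq: "complex_of_real (\<beta> j) * mbm_kernel h (t j) u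
        = complex_of_real (\<beta> j / c j) * (exp (\<i> * complex_of_real (t j * u)) - 1)
          * complex_of_real (u powr (- (h (t j) + 1/2)))" for j
    proof -
      have "complex_of_real (c j * \<bar>u\<bar> powr (h (t j) + 1/2))
          = inverse (complex_of_real (inverse (c j) * u powr (- (h (t j) + 1/2))))"
        unfolding powr_minus using u by simp
      hence "mbm_kernel h (t j) u = (exp (\<i> * complex_of_real (t j * u)) - 1)
          * complex_of_real (inverse (c j) * u powr (- (h (t j) + 1/2)))"
        unfolding mbm_kernel_def c_def by (simp only: divide_inverse inverse_inverse_eq)
      thus ?thesis by (simp only: of_real_mult of_real_inverse divide_inverse mult_ac)
    qed
    show "(\<Sum>j\<in>J. complex_of_real (\<beta> j / c j) * (exp (\<i> * complex_of_real (t j * u)) - 1)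
             * complex_of_real (u powr (- (h (t j) + 1/2)))) = 0"
      unfolding term_eq[symmetric] by (rule Z[OF u])
  qed
  show ?thesis
  proof
    fix j assume "j \<in> J"
    with \<open>\<forall>j\<in>J. \<beta> j / c j = 0\<close> have "\<beta> j / c j = 0" by blast
    thus "\<beta> j = 0" using c[of j] by simp
  qed
qed

text \<open>Strict positive definiteness of the mBm covariance at distinct nonzero times: the
  variance \<open>\<integral> |\<Sum>\<^sub>j \<beta>\<^sub>j kernel\<^sub>j|\<^sup>2\<close> vanishes only if the continuous integrand vanishes on
  \<open>u > 0\<close>, which by independence of the kernels forces \<open>\<beta> = 0\<close>.\<close>
lemma mbm_quadratic_form_pos:
  assumes h: "\<forall>x. 0 < h x \<and> h x < 1" and fin: "finite J" and inj: "inj_on t J"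
    and tnz: "\<forall>j\<in>J. t j \<noteq> 0" and nz: "\<exists>j\<in>J. \<beta> j \<noteq> 0"
  shows "(\<Sum>j\<in>J. \<Sum>k\<in>J. \<beta> j * \<beta> k * R_mbm h (t j) (t k)) > 0"
proof -
  define \<phi> where "\<phi> u = (\<Sum>j\<in>J. complex_of_real (\<beta> j) * mbm_kernel h (t j) u)" for u
  define v where "v = (\<Sum>j\<in>J. \<Sum>k\<in>J. \<beta> j * \<beta> k * R_mbm h (t j) (t k))"
  have int: "has_bochner_integral lborel (\<lambda>u. (cmod (\<phi> u))\<^sup>2) v"
    unfolding \<phi>_def v_def by (rule mbm_variance_spectral[OF h fin])
  have "v \<ge> 0"
  proof -
    have "0 \<le> integral\<^sup>L lborel (\<lambda>u. (cmod (\<phi> u))\<^sup>2)" by (rule integral_nonneg_AE) simp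
    thus ?thesis using has_bochner_integral_integral_eq[OF int] by simp
  qed
  moreover have "v \<noteq> 0"
  proof
    assume "v = 0"
    moreover have integrable: "integrable lborel (\<lambda>u. (cmod (\<phi> u))\<^sup>2)"
      using int by (simp add: has_bochner_integral_iff)
    ultimately have "AE u in lborel. (cmod (\<phi> u))\<^sup>2 = 0"
      using has_bochner_integral_integral_eq[OF int] integral_nonneg_eq_0_iff_AE[OF integrable] by simp
    hence AE0: "AE u in lborel. \<phi> u = 0" by simp
    have "\<phi> u = 0" if u: "u > 0" for u
    proof (rule AE_lborel_continuous_eq[OF AE0])
      have "c_mbm (h (t j)) * \<bar>u\<bar> powr (h (t j) + 1/2) \<noteq> 0" for j
        using u h c_mbm_pos[of "h (t j)"] by auto
      thus "isCont \<phi> u"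
        unfolding \<phi>_def mbm_kernel_def using u by (intro continuous_intros) auto
    qed
    hence "\<forall>j\<in>J. \<beta> j = 0"
      unfolding \<phi>_def by (intro mbm_kernel_indep[OF h fin inj tnz])
    with nz show False by auto
  qed
  ultimately show ?thesis unfolding v_def by simp
qed

section \<open>Gaussian combinations and the main theorem\<close>

lemma centered_gaussian_process_combination:
  fixes J :: "'i set" and t :: "'i \<Rightarrow> real" and \<beta> :: "'i \<Rightarrow> real"
  assumes G: "centered_gaussian_process M X K" and fin: "finite J" and inj: "inj_on t J"
  defines "v \<equiv> \<Sum>j\<in>J. \<Sum>k\<in>J. \<beta> j * \<beta> k * K (t j) (t k)"
  shows "(0 < v \<and> distributed M lborel (\<lambda>\<omega>. \<Sum>j\<in>J. \<beta> j * X (t j) \<omega>) (normal_density 0 (sqrt v)))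
       \<or> (v = 0 \<and> (AE \<omega> in M. (\<Sum>j\<in>J. \<beta> j * X (t j) \<omega>) = 0))"
proof -
  define c where "c s = \<beta> (the_inv_into J t s)" for s
  have ct: "c (t j) = \<beta> j" if "j \<in> J" for j
    unfolding c_def using that inj by (simp add: the_inv_into_f_f)
  have Y: "(\<Sum>s\<in>t ` J. c s * X s \<omega>) = (\<Sum>j\<in>J. \<beta> j * X (t j) \<omega>)" for \<omega>
    by (simp add: sum.reindex[OF inj] ct)
  have V: "(\<Sum>s\<in>t ` J. \<Sum>r\<in>t ` J. c s * c r * K s r) = v"
    unfolding v_def by (simp add: sum.reindex[OF inj] ct)
  have GP: "\<And>I c. finite I \<Longrightarrow> (let Y = (\<lambda>\<omega>. \<Sum>s\<in>I. c s * X s \<omega>);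
        v = (\<Sum>s\<in>I. \<Sum>r\<in>I. c s * c r * K s r)
      in (0 < v \<and> distributed M lborel Y (normal_density 0 (sqrt v))) \<or>
         (v = 0 \<and> (AE \<omega> in M. Y \<omega> = 0)))"
    using G unfolding centered_gaussian_process_def by auto
  from GP[of "t ` J" c] fin show ?thesis by (simp only: Let_def Y V finite_imageI)
qed

lemma distributed_not_AE_const:
  fixes Y :: "'a \<Rightarrow> real"
  assumes "prob_space M" and dist: "distributed M lborel Y f"
  shows "\<not> (AE \<omega> in M. Y \<omega> = c)"
proof
  interpret prob_space M by fact
  assume AE: "AE \<omega> in M. Y \<omega> = c"
  have Y: "Y \<in> borel_measurable M" using distributed_measurable[OF dist] by simp
  have "emeasure M (Y -` {c} \<inter> space M) = emeasure M (space M)"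
    by (rule emeasure_eq_AE) (use AE Y in auto)
  hence "emeasure M (Y -` {c} \<inter> space M) = 1" by (simp add: emeasure_space_1)
  moreover have "emeasure M (Y -` {c} \<inter> space M) = (\<integral>\<^sup>+x. f x * indicator {c} x \<partial>lborel)"
    by (rule distributed_emeasure[OF dist]) simp
  moreover have "\<dots> = (\<integral>\<^sup>+(x::real). 0 \<partial>lborel)"
    by (rule nn_integral_cong_AE) (use AE_lborel_singleton[of c] in \<open>eventually_elim, simp\<close>)
  ultimately show False by simp
qed

theorem mainTheorem4:
  fixes h :: "real \<Rightarrow> real" and M :: "'a measure" and X :: "real \<Rightarrow> 'a \<Rightarrow> real"
    and n :: nat and t :: "nat \<Rightarrow> real" and \<beta> :: "nat \<Rightarrow> real"
  assumes "continuous_on UNIV h"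
    and "\<forall>x. 0 < h x \<and> h x < 1"
    and "normalized_mbm M h X"
    and "n \<ge> 1"
    and "inj_on t {1..n}"
    and "\<forall>j\<in>{1..n}. t j \<noteq> 0"
    and "AE \<omega> in M. (\<Sum>j=1..n. \<beta> j * X (t j) \<omega>) = 0"
  shows "\<forall>j\<in>{1..n}. \<beta> j = 0"
proof (rule ccontr)
  assume "\<not> (\<forall>j\<in>{1..n}. \<beta> j = 0)"
  hence "(\<Sum>j\<in>{1..n}. \<Sum>k\<in>{1..n}. \<beta> j * \<beta> k * R_mbm h (t j) (t k)) > 0"
    using assms(2,5,6) by (intro mbm_quadratic_form_pos) auto
  moreover have G: "centered_gaussian_process M X (R_mbm h)"
    using assms(3) unfolding normalized_mbm_def .
  ultimately have dist: "distributed M lborel (\<lambda>\<omega>. \<Sum>j=1..n. \<beta> j * X (t j) \<omega>)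
      (normal_density 0 (sqrt (\<Sum>j\<in>{1..n}. \<Sum>k\<in>{1..n}. \<beta> j * \<beta> k * R_mbm h (t j) (t k))))"
    using centered_gaussian_process_combination[OF G finite_atLeastAtMost assms(5), of \<beta>] by auto
  have "prob_space M" using G unfolding centered_gaussian_process_def by simp
  from distributed_not_AE_const[OF this dist] assms(7) show False by simp
qed

end
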